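(* Let $C_t\subseteq\mathbb{R}^d$, $t=1,2,\dots$, be closed convex sets and $\ell_t:\mathbb{R}^d\to\mathbb{R}$ convex losses, with $g_t$ a subgradient selection of $\ell_t$ used by the algorithm. Suppose that for each $t$: $\ell_t$ is $L$-Lipschitz, $\ell_t$ is $(h_t,0)$-restorative, and the pair $(\ell_t,C_t)$ satisfies inward flow. Then the hidden iterates of lazy gradient descent with learning rate $\eta>0$ satisfy, for every $T\ge1$, $$\|\tilde\theta_{T+1}\|_2\le\sqrt{\|\tilde\theta_1\|_2^2+\eta^2L^2T+2\eta L\sum_{t=1}^T h_t}.$$ If moreover $(h_t)$ is nondecreasing, then $$\Bigg\|\frac1T\sum_{t=1}^T g_t(\theta_t)\Bigg\|_2\le\frac{2\|\tilde\theta_1\|_2}{\eta T}+\sqrt{\frac{L^2}{T}+\frac{2Lh_T}{\eta T}},$$ which tends to $0$ as $T\to\infty$ whenever $h_t$ is sublinear in $t$.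
   Context: Lazy gradient descent: given $\tilde\theta_1\in C_1$ and $\eta>0$, for $t=1,2,\dots$ set $\theta_t=\Pi_{C_t}(\tilde\theta_t)$ (Euclidean projection) and $\tilde\theta_{t+1}=\tilde\theta_t-\eta g_t(\theta_t)$. A loss $\ell$ is $L$-Lipschitz if all its subgradients $g$ satisfy $\|g(\theta)\|_2\le L$ for all $\theta$. For $h\ge0$ and a nonnegative function $\phi$, $\ell$ is $(h,\phi)$-restorative if all its subgradients $g$ satisfy $\langle\theta,g(\theta)\rangle\ge\phi(\theta)$ whenever $\|\theta\|_2>h$. A pair $(\ell,C)$ with $C$ closed convex and $g$ the (sub)gradient of $\ell$ satisfies inward flow if $-g(\theta)\in T_C(\theta)$ for all $\theta$ on the boundary of $C$, where $T_C(x)=\mathrm{cl}\{y:\exists\beta>0\text{ with }x+\varepsilon y\in C\ \forall\varepsilon\in[0,\beta]\}$ is the tangent cone. *)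

theory Defs
  imports "HOL-Analysis.Analysis"
begin

definition is_subgradient :: "('a::euclidean_space \<Rightarrow> real) \<Rightarrow> 'a \<Rightarrow> 'a \<Rightarrow> bool" where
  "is_subgradient l x v \<longleftrightarrow> (\<forall>y. l y \<ge> l x + inner v (y - x))"

definition lipschitz_loss :: "real \<Rightarrow> ('a::euclidean_space \<Rightarrow> real) \<Rightarrow> bool" where
  "lipschitz_loss L l \<longleftrightarrow> (\<forall>x v. is_subgradient l x v \<longrightarrow> norm v \<le> L)"

definition restorative :: "real \<Rightarrow> ('a::euclidean_space \<Rightarrow> real) \<Rightarrow> ('a \<Rightarrow> real) \<Rightarrow> bool" where
  "restorative h phi l \<longleftrightarrow> h \<ge> 0 \<and> (\<forall>x. phi x \<ge> 0) \<and>
     (\<forall>x v. is_subgradient l x v \<longrightarrow> norm x > h \<longrightarrow> inner x v \<ge> phi x)"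

definition tangent_cone :: "'a::euclidean_space set \<Rightarrow> 'a \<Rightarrow> 'a set" where
  "tangent_cone C x = closure {y. \<exists>\<beta>>0. \<forall>\<epsilon>\<in>{0..\<beta>}. x + \<epsilon> *\<^sub>R y \<in> C}"

text \<open>Inward flow for the pair (l, C), with g the (sub)gradient (selection) of l.\<close>
definition inward_flow :: "('a::euclidean_space \<Rightarrow> 'a) \<Rightarrow> 'a set \<Rightarrow> bool" where
  "inward_flow g C \<longleftrightarrow> (\<forall>x\<in>frontier C. - g x \<in> tangent_cone C x)"

end

theory Submission
  imports Defs
begin

text \<open>
  Write \<open>\<theta>\<^sub>t = \<Pi>\<^sub>C\<^sub>t(\<theta>h\<^sub>t)\<close> and \<open>v\<^sub>t = g\<^sub>t(\<theta>\<^sub>t)\<close>. The key estimate is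
  \<open>\<langle>\<theta>h\<^sub>t, v\<^sub>t\<rangle> \<ge> -L h\<^sub>t\<close>: the residual \<open>\<theta>h\<^sub>t - \<theta>\<^sub>t\<close> lies in the normal cone
  of \<open>C\<^sub>t\<close> at \<open>\<theta>\<^sub>t\<close> while inward flow puts \<open>-v\<^sub>t\<close> in the tangent cone, so
  \<open>\<langle>\<theta>h\<^sub>t - \<theta>\<^sub>t, v\<^sub>t\<rangle> \<ge> 0\<close>; and \<open>\<langle>\<theta>\<^sub>t, v\<^sub>t\<rangle> \<ge> 0\<close> outside the ball of radius
  \<open>h\<^sub>t\<close> by restorativity, \<open>\<ge> -L h\<^sub>t\<close> inside it by Cauchy-Schwarz.
  Expanding \<open>\<parallel>\<theta>h\<^sub>t - \<eta> v\<^sub>t\<parallel>\<^sup>2\<close> then bounds the growth of \<open>\<parallel>\<theta>h\<^sub>t\<parallel>\<^sup>2\<close> per step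
  by \<open>\<eta>\<^sup>2L\<^sup>2 + 2\<eta>L h\<^sub>t\<close>, and the average gradient is
  \<open>(\<theta>h\<^sub>1 - \<theta>h\<^sub>T\<^sub>+\<^sub>1) / (\<eta>T)\<close>.
\<close>

lemma closest_point_in_frontier:
  fixes S :: "'a::euclidean_space set"
  assumes "closed S" "S \<noteq> {}" "x \<notin> S"
  shows "closest_point S x \<in> frontier S"
proof -
  have "closest_point S x \<notin> interior S"
  proof
    assume int: "closest_point S x \<in> interior S"
    then have "x \<in> affine hull S"
      using affine_hull_nonempty_interior by blast
    with int have "x \<in> rel_interior S"
      using closest_point_in_rel_interior[OF assms(1,2)] interior_subset_rel_interior by blast
    with assms(3) show False
      using rel_interior_subset by blast
  qed
  then show ?thesis
    using assms closest_point_in_set by (simp add: frontier_def)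
qed

lemma inner_closest_point_tangent_cone_le:
  fixes S :: "'a::euclidean_space set"
  assumes "closed S" "convex S" and y: "y \<in> tangent_cone S (closest_point S x)"
  shows "inner (x - closest_point S x) y \<le> 0"
proof -
  let ?p = "closest_point S x"
  have "{y. \<exists>\<beta>>0. \<forall>\<epsilon>\<in>{0..\<beta>}. ?p + \<epsilon> *\<^sub>R y \<in> S} \<subseteq> {y. inner (x - ?p) y \<le> 0}"
  proof
    fix y assume "y \<in> {y. \<exists>\<beta>>0. \<forall>\<epsilon>\<in>{0..\<beta>}. ?p + \<epsilon> *\<^sub>R y \<in> S}"
    then obtain \<beta> where "\<beta> > 0" "?p + \<beta> *\<^sub>R y \<in> S"
      by auto
    with closest_point_dot[OF assms(2,1), of "?p + \<beta> *\<^sub>R y" x]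
    show "y \<in> {y. inner (x - ?p) y \<le> 0}"
      by (simp add: mult_le_0_iff)
  qed
  then have "tangent_cone S ?p \<subseteq> {y. inner (x - ?p) y \<le> 0}"
    unfolding tangent_cone_def using closed_halfspace_le[of "x - ?p" 0]
    by (intro closure_minimal) auto
  with y show ?thesis
    by auto
qed

lemma inward_flow_inner_residual_nonneg:
  fixes S :: "'a::euclidean_space set"
  assumes "closed S" "convex S" "S \<noteq> {}" "inward_flow g S"
  shows "0 \<le> inner (x - closest_point S x) (g (closest_point S x))"
proof (cases "x \<in> S")
  case True
  then show ?thesis
    by (simp add: closest_point_self)
next
  case False
  then have "- g (closest_point S x) \<in> tangent_cone S (closest_point S x)"
    using assms closest_point_in_frontier unfolding inward_flow_def by blast
  from inner_closest_point_tangent_cone_le[OF assms(1,2) this] show ?thesis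
    by simp
qed

lemma restorative_inner_ge:
  assumes "restorative r (\<lambda>_. 0) l" "is_subgradient l x v" "norm v \<le> L"
  shows "- (L * r) \<le> inner x v"
proof (cases "norm x > r")
  case True
  with assms have "0 \<le> inner x v" "0 \<le> r"
    unfolding restorative_def by auto
  moreover have "0 \<le> L"
    using assms(3) norm_ge_zero order_trans by blast
  ultimately show ?thesis
    using mult_nonneg_nonneg[of L r] by linarith
next
  case False
  then have "0 \<le> r"
    using norm_ge_zero[of x] by linarith
  have "\<bar>inner x v\<bar> \<le> norm x * norm v"
    by (rule Cauchy_Schwarz_ineq2)
  also have "\<dots> \<le> r * L"
    using False assms(3) \<open>0 \<le> r\<close> by (intro mult_mono) auto
  finally show ?thesis
    by (simp add: mult.commute)
qed

lemma norm_gradient_step_sq_le: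
  fixes x v :: "'a::real_inner"
  assumes "- (L * r) \<le> inner x v" "norm v \<le> L" "0 \<le> \<eta>"
  shows "(norm (x - \<eta> *\<^sub>R v))\<^sup>2 \<le> (norm x)\<^sup>2 + \<eta>\<^sup>2 * L\<^sup>2 + 2 * \<eta> * L * r"
proof -
  have "(norm (x - \<eta> *\<^sub>R v))\<^sup>2 = (norm x)\<^sup>2 + \<eta>\<^sup>2 * (norm v)\<^sup>2 - 2 * \<eta> * inner x v"
    by (simp only: power2_norm_eq_inner)
      (simp add: inner_diff_left inner_diff_right inner_commute power2_eq_square algebra_simps)
  moreover have "\<eta>\<^sup>2 * (norm v)\<^sup>2 \<le> \<eta>\<^sup>2 * L\<^sup>2"
    using assms(2) by (intro mult_left_mono power_mono) auto
  moreover have "- (2 * \<eta> * inner x v) \<le> 2 * \<eta> * L * r"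
    using mult_left_mono[OF assms(1), of "2 * \<eta>"] assms(3) by (simp add: algebra_simps)
  ultimately show ?thesis
    by linarith
qed

lemma bounded_increments_imp_le_sum:
  fixes a b :: "nat \<Rightarrow> real"
  assumes "\<And>t. t \<ge> 1 \<Longrightarrow> a (Suc t) \<le> a t + b t"
  shows "a (T + 1) \<le> a 1 + (\<Sum>t=1..T. b t)"
proof -
  have "a (T + 1) - a 1 = (\<Sum>t=1..T. a (Suc t) - a t)"
    by (simp add: sum_Suc_diff)
  also have "\<dots> \<le> (\<Sum>t=1..T. b t)"
    using assms by (intro sum_mono) (simp add: algebra_simps)
  finally show ?thesis
    by simp
qed

lemma tendsto_bound_zero_if_sublinear:
  fixes f :: "nat \<Rightarrow> real"
  assumes "(\<lambda>n. f n / real n) \<longlonglongrightarrow> 0"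
  shows "(\<lambda>n. a / (e * real n) + sqrt (b / real n + c * f n / (e * real n))) \<longlonglongrightarrow> 0"
proof -
  have "(\<lambda>n. (a / e) / real n + sqrt (b / real n + (c / e) * (f n / real n)))
          \<longlonglongrightarrow> 0 + sqrt (0 + (c / e) * 0)"
    by (intro tendsto_intros lim_const_over_n assms)
  then show ?thesis
    by simp
qed

locale lazy_gradient_descent =
  fixes C :: "nat \<Rightarrow> 'a::euclidean_space set"
    and l :: "nat \<Rightarrow> 'a \<Rightarrow> real"
    and g :: "nat \<Rightarrow> 'a \<Rightarrow> 'a"
    and h :: "nat \<Rightarrow> real"
    and L \<eta> :: real
    and \<theta> \<theta>h :: "nat \<Rightarrow> 'a"
  assumes closed_C: "\<And>t. t \<ge> 1 \<Longrightarrow> closed (C t)"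
    and convex_C: "\<And>t. t \<ge> 1 \<Longrightarrow> convex (C t)"
    and nonempty_C: "\<And>t. t \<ge> 1 \<Longrightarrow> C t \<noteq> {}"
    and subgradient: "\<And>t x. t \<ge> 1 \<Longrightarrow> is_subgradient (l t) x (g t x)"
    and lipschitz: "\<And>t. t \<ge> 1 \<Longrightarrow> lipschitz_loss L (l t)"
    and restorative: "\<And>t. t \<ge> 1 \<Longrightarrow> restorative (h t) (\<lambda>_. 0) (l t)"
    and inward: "\<And>t. t \<ge> 1 \<Longrightarrow> inward_flow (g t) (C t)"
    and eta_pos: "\<eta> > 0"
    and projection: "\<And>t. t \<ge> 1 \<Longrightarrow> \<theta> t = closest_point (C t) (\<theta>h t)"
    and step: "\<And>t. t \<ge> 1 \<Longrightarrow> \<theta>h (Suc t) = \<theta>h t - \<eta> *\<^sub>R g t (\<theta> t)"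
begin

lemma norm_gradient_le: "t \<ge> 1 \<Longrightarrow> norm (g t x) \<le> L"
  using lipschitz subgradient unfolding lipschitz_loss_def by blast

lemma L_nonneg: "0 \<le> L"
  using norm_gradient_le[of 1] norm_ge_zero order_trans by blast

lemma h_nonneg: "t \<ge> 1 \<Longrightarrow> 0 \<le> h t"
  using restorative unfolding restorative_def by blast

lemma inner_hidden_gradient_ge:
  assumes t: "t \<ge> 1"
  shows "- (L * h t) \<le> inner (\<theta>h t) (g t (\<theta> t))"
proof -
  have "0 \<le> inner (\<theta>h t - \<theta> t) (g t (\<theta> t))"
    using inward_flow_inner_residual_nonneg[OF closed_C convex_C nonempty_C inward] t
    by (simp add: projection)
  moreover have "- (L * h t) \<le> inner (\<theta> t) (g t (\<theta> t))"
    using restorative_inner_ge[OF restorative subgradient norm_gradient_le] t by blast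
  ultimately show ?thesis
    by (simp add: inner_diff_left)
qed

lemma norm_hidden_sq_le:
  "(norm (\<theta>h (T + 1)))\<^sup>2 \<le> (norm (\<theta>h 1))\<^sup>2 + \<eta>\<^sup>2 * L\<^sup>2 * real T + 2 * \<eta> * L * (\<Sum>t=1..T. h t)"
proof -
  have "(norm (\<theta>h (Suc t)))\<^sup>2 \<le> (norm (\<theta>h t))\<^sup>2 + (\<eta>\<^sup>2 * L\<^sup>2 + 2 * \<eta> * L * h t)"
    if t: "t \<ge> 1" for t
    using norm_gradient_step_sq_le[OF inner_hidden_gradient_ge[OF t] norm_gradient_le[OF t]] eta_pos
    by (simp add: step[OF t] add.assoc)
  then have "(norm (\<theta>h (T + 1)))\<^sup>2 \<le> (norm (\<theta>h 1))\<^sup>2 + (\<Sum>t=1..T. \<eta>\<^sup>2 * L\<^sup>2 + 2 * \<eta> * L * h t)"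
    by (rule bounded_increments_imp_le_sum)
  moreover have "(\<Sum>t=1..T. \<eta>\<^sup>2 * L\<^sup>2 + 2 * \<eta> * L * h t)
                   = \<eta>\<^sup>2 * L\<^sup>2 * real T + 2 * \<eta> * L * (\<Sum>t=1..T. h t)"
    by (simp add: sum.distrib sum_distrib_left)
  ultimately show ?thesis
    by simp
qed

lemma norm_hidden_le:
  "norm (\<theta>h (T + 1)) \<le> sqrt ((norm (\<theta>h 1))\<^sup>2 + \<eta>\<^sup>2 * L\<^sup>2 * real T + 2 * \<eta> * L * (\<Sum>t=1..T. h t))"
  using norm_hidden_sq_le by (rule real_le_rsqrt)

lemma scaleR_sum_gradients: "\<eta> *\<^sub>R (\<Sum>t=1..T. g t (\<theta> t)) = \<theta>h 1 - \<theta>h (T + 1)"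
proof -
  have "\<eta> *\<^sub>R (\<Sum>t=1..T. g t (\<theta> t)) = - (\<Sum>t=1..T. \<theta>h (Suc t) - \<theta>h t)"
    by (simp add: scaleR_sum_right step sum_negf)
  then show ?thesis
    by (simp add: sum_Suc_diff)
qed

lemma norm_average_gradient_le:
  assumes mono: "\<And>s t. 1 \<le> s \<Longrightarrow> s \<le> t \<Longrightarrow> h s \<le> h t" and T: "T \<ge> 1"
  shows "norm ((1 / real T) *\<^sub>R (\<Sum>t=1..T. g t (\<theta> t)))
           \<le> 2 * norm (\<theta>h 1) / (\<eta> * real T) + sqrt (L\<^sup>2 / real T + 2 * L * h T / (\<eta> * real T))"
proof -
  define a where "a = norm (\<theta>h 1)"
  define B where "B = \<eta>\<^sup>2 * L\<^sup>2 * real T + 2 * \<eta> * L * (real T * h T)"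
  have "real T > 0"
    using T by simp
  then have \<eta>T: "\<eta> * real T > 0"
    using eta_pos by simp
  have "(\<Sum>t=1..T. h t) \<le> real T * h T"
    using sum_bounded_above[of "{1..T}" h "h T"] mono by auto
  then have "2 * \<eta> * L * (\<Sum>t=1..T. h t) \<le> 2 * \<eta> * L * (real T * h T)"
    using eta_pos L_nonneg by (intro mult_left_mono) auto
  then have "norm (\<theta>h (T + 1)) \<le> sqrt (a\<^sup>2 + B)"
    using norm_hidden_le[of T] unfolding a_def B_def add.assoc[symmetric]
    by (meson add_left_mono order_trans real_sqrt_le_mono)
  also have "\<dots> \<le> a + sqrt B"
    using sqrt_add_le_add_sqrt[of "a\<^sup>2" B] eta_pos L_nonneg h_nonneg[OF T]
    by (simp add: a_def B_def)
  finally have "norm (\<theta>h 1 - \<theta>h (T + 1)) \<le> 2 * a + sqrt B"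
    using norm_triangle_ineq4[of "\<theta>h 1" "\<theta>h (T + 1)"] unfolding a_def by linarith
  moreover have "(1 / real T) *\<^sub>R (\<Sum>t=1..T. g t (\<theta> t)) = (1 / (\<eta> * real T)) *\<^sub>R (\<theta>h 1 - \<theta>h (T + 1))"
    unfolding scaleR_sum_gradients[symmetric] using eta_pos by simp
  ultimately have "norm ((1 / real T) *\<^sub>R (\<Sum>t=1..T. g t (\<theta> t))) \<le> 2 * a / (\<eta> * real T) + sqrt B / (\<eta> * real T)"
    using \<eta>T by (simp add: divide_right_mono add_divide_distrib[symmetric])
  also have "sqrt B / (\<eta> * real T) = sqrt (B / (\<eta> * real T)\<^sup>2)"
    using \<eta>T by (simp add: real_sqrt_divide)
  also have "B / (\<eta> * real T)\<^sup>2 = L\<^sup>2 / real T + 2 * L * h T / (\<eta> * real T)"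
    using eta_pos \<open>real T > 0\<close> unfolding B_def by (simp add: field_simps power2_eq_square)
  finally show ?thesis
    by (simp add: a_def)
qed

end

theorem proposition5:
  fixes C :: "nat \<Rightarrow> 'a::euclidean_space set"
    and l :: "nat \<Rightarrow> 'a \<Rightarrow> real"
    and g :: "nat \<Rightarrow> 'a \<Rightarrow> 'a"
    and h :: "nat \<Rightarrow> real"
    and L \<eta> :: real
    and \<theta> \<theta>h :: "nat \<Rightarrow> 'a"
  assumes closedC: "\<And>t. t \<ge> 1 \<Longrightarrow> closed (C t)"
    and convexC: "\<And>t. t \<ge> 1 \<Longrightarrow> convex (C t)"
    and nonemptyC: "\<And>t. t \<ge> 1 \<Longrightarrow> C t \<noteq> {}"
    and convex_loss: "\<And>t. t \<ge> 1 \<Longrightarrow> convex_on UNIV (l t)"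
    and subgrad: "\<And>t x. t \<ge> 1 \<Longrightarrow> is_subgradient (l t) x (g t x)"
    and lip: "\<And>t. t \<ge> 1 \<Longrightarrow> lipschitz_loss L (l t)"
    and rest: "\<And>t. t \<ge> 1 \<Longrightarrow> restorative (h t) (\<lambda>_. 0) (l t)"
    and inward: "\<And>t. t \<ge> 1 \<Longrightarrow> inward_flow (g t) (C t)"
    and eta: "\<eta> > 0"
    and init: "\<theta>h 1 \<in> C 1"
    and proj: "\<And>t. t \<ge> 1 \<Longrightarrow> \<theta> t = closest_point (C t) (\<theta>h t)"
    and step: "\<And>t. t \<ge> 1 \<Longrightarrow> \<theta>h (Suc t) = \<theta>h t - \<eta> *\<^sub>R g t (\<theta> t)"
  shows "(\<forall>T\<ge>1. norm (\<theta>h (T + 1)) \<le>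
            sqrt ((norm (\<theta>h 1))\<^sup>2 + \<eta>\<^sup>2 * L\<^sup>2 * real T + 2 * \<eta> * L * (\<Sum>t=1..T. h t)))
       \<and> ((\<forall>s t. 1 \<le> s \<longrightarrow> s \<le> t \<longrightarrow> h s \<le> h t) \<longrightarrow>
            (\<forall>T\<ge>1. norm ((1 / real T) *\<^sub>R (\<Sum>t=1..T. g t (\<theta> t))) \<le>
               2 * norm (\<theta>h 1) / (\<eta> * real T)
               + sqrt (L\<^sup>2 / real T + 2 * L * h T / (\<eta> * real T)))
          \<and> (((\<lambda>T. h T / real T) \<longlonglongrightarrow> 0) \<longrightarrow>
             ((\<lambda>T. 2 * norm (\<theta>h 1) / (\<eta> * real T)
               + sqrt (L\<^sup>2 / real T + 2 * L * h T / (\<eta> * real T))) \<longlonglongrightarrow> 0)))"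
proof -
  interpret lazy_gradient_descent C l g h L \<eta> \<theta> \<theta>h
    using closedC convexC nonemptyC subgrad lip rest inward eta proj step
    by unfold_locales
  show ?thesis
    using norm_hidden_le norm_average_gradient_le tendsto_bound_zero_if_sublinear by blast
qed

end
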